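(* Let $M\ge1$. Suppose the enumeration $x_{1:\infty}$ is an $M$-bounded displacement enumeration with respect to a language $L$. Then for every language $L'\subseteq L$, $x_{1:\infty}$ is an $M$-bounded displacement enumeration with respect to $L'$.
   Context: The universe is $U=\mathbb{N}$ with its natural order; a language is an infinite subset of $U$, and its canonical enumeration is its elements listed in increasing order $\ell_1<\ell_2<\cdots$. For a language $L$ with canonical enumeration $\ell_1,\ell_2,\dots$ and $x\in U$, let $\sigma(x,L)=j$ if $x=\ell_j$ and $\sigma(x,L)=0$ if $x\notin L$. An enumeration $x_1,x_2,\dots$ (any sequence of elements of $U$) is an $M$-bounded displacement enumeration with respect to $L$ if there is $n^\star$ such that $\sigma(x_n,L)\le Mn$ for all $n\ge n^\star$. *)

theory Defs
  imports Complex_Main "HOL-Library.Infinite_Set"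
begin

definition language :: "nat set \<Rightarrow> bool" where
  "language L \<longleftrightarrow> infinite L"

text \<open>Canonical enumeration, 1-indexed: canon L j is the j-th smallest element (j \<ge> 1).\<close>
definition canon :: "nat set \<Rightarrow> nat \<Rightarrow> nat" where
  "canon L j = enumerate L (j - 1)"

definition sigma :: "nat \<Rightarrow> nat set \<Rightarrow> nat" where
  "sigma x L = (if x \<in> L then (THE j. j \<ge> 1 \<and> canon L j = x) else 0)"

text \<open>Enumerations are sequences x :: nat \<Rightarrow> nat, indexed from 1 (x 0 is ignored).\<close>
definition bounded_disp :: "real \<Rightarrow> (nat \<Rightarrow> nat) \<Rightarrow> nat set \<Rightarrow> bool" where
  "bounded_disp M x L \<longleftrightarrow>
     (\<exists>nstar \<ge> 1. \<forall>n \<ge> nstar. real (sigma (x n) L) \<le> M * real n)"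

end

theory Submission
  imports Defs
begin

text \<open>The position of an element in the canonical enumeration of a language is one plus the
  number of smaller elements of the language. Passing to a sublanguage can only remove smaller
  elements, so positions, and hence displacements, do not increase.\<close>

lemma card_less_enumerate:
  fixes S :: "nat set"
  assumes "infinite S"
  shows "card {y\<in>S. y < enumerate S n} = n"
proof -
  have "{y\<in>S. y < enumerate S n} = enumerate S ` {..<n}"
  proof
    show "{y\<in>S. y < enumerate S n} \<subseteq> enumerate S ` {..<n}"
    proof
      fix y assume y: "y \<in> {y\<in>S. y < enumerate S n}"
      then obtain m where "enumerate S m = y"
        using enumerate_Ex[OF assms] by blast
      with y assms show "y \<in> enumerate S ` {..<n}" by auto
    qed
    show "enumerate S ` {..<n} \<subseteq> {y\<in>S. y < enumerate S n}"
      using assms enumerate_in_set by auto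
  qed
  moreover have "inj_on (enumerate S) {..<n}"
    using inj_enumerate[OF assms] inj_on_subset by blast
  ultimately show ?thesis by (simp add: card_image)
qed

lemma sigma_eq_Suc_card_less:
  fixes S :: "nat set"
  assumes "infinite S" "z \<in> S"
  shows "sigma z S = Suc (card {y\<in>S. y < z})"
proof -
  obtain m where m: "enumerate S m = z"
    using enumerate_Ex[OF assms] by blast
  have "(THE j. j \<ge> 1 \<and> canon S j = z) = Suc m"
  proof (rule the_equality)
    show "Suc m \<ge> 1 \<and> canon S (Suc m) = z"
      using m by (simp add: canon_def)
    fix j assume j: "j \<ge> 1 \<and> canon S j = z"
    then have "enumerate S (j - 1) = enumerate S m"
      using m by (simp add: canon_def)
    then have "j - 1 = m"
      using inj_enumerate[OF assms(1)] by (simp add: inj_eq)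
    with j show "j = Suc m" by auto
  qed
  then show ?thesis
    using assms m card_less_enumerate[OF assms(1), of m] by (simp add: sigma_def)
qed

lemma sigma_le_subset:
  fixes L L' :: "nat set"
  assumes "infinite L'" "L' \<subseteq> L" "infinite L"
  shows "sigma z L' \<le> sigma z L"
proof (cases "z \<in> L'")
  case True
  with assms(2) have "z \<in> L" by auto
  have "card {y\<in>L'. y < z} \<le> card {y\<in>L. y < z}"
    using assms(2) by (intro card_mono) auto
  then show ?thesis
    using sigma_eq_Suc_card_less[OF assms(3) \<open>z \<in> L\<close>]
      sigma_eq_Suc_card_less[OF assms(1) True] by simp
next
  case False
  then show ?thesis by (simp add: sigma_def)
qed

theorem proposition7p5:
  fixes M :: real and x :: "nat \<Rightarrow> nat" and L L' :: "nat set"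
  assumes "M \<ge> 1"
    and "language L"
    and "bounded_disp M x L"
    and "language L'"
    and "L' \<subseteq> L"
  shows "bounded_disp M x L'"
proof -
  obtain nstar where "nstar \<ge> 1" and bound: "\<forall>n \<ge> nstar. real (sigma (x n) L) \<le> M * real n"
    using assms(3) unfolding bounded_disp_def by blast
  moreover have "sigma (x n) L' \<le> sigma (x n) L" for n
    using sigma_le_subset assms(2,4,5) unfolding language_def by blast
  ultimately show ?thesis
    unfolding bounded_disp_def by (meson of_nat_le_iff order_trans)
qed

end
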